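(* The canonical bases $W_+M_N$ and $\hat W_-$ of solutions of (L) on $\Sigma_1$ are related by a constant matrix $Q=Q(B,A)$, $W_+(z)M_N=\hat W_-(z)Q$, and $Q^2=\mathrm{Id}$.
   Context: Let $\omega>0$, $l=B/\omega\ge0$, $\mu=A/(2\omega)>0$. System (L): $u'=z^{-2}\big(-(lz+\mu(1+z^2))u+\frac{z}{2i\omega}v\big)$, $v'=\frac{1}{2i\omega z}u$. $F(z)=\operatorname{diag}(z^{-l}e^{\mu(1/z-z)},1)$. $S_\pm$ are sectors with vertex $0$ containing the closed upper/lower half-plane minus $0$, closures avoiding $i\mathbb R_\mp$, $S_-=\overline{S_+}$ (so $z\mapsto1/z$ swaps $S_+$ and $S_-$). $H_\pm$ are the unique invertible matrix functions holomorphic on $S_\pm$, $C^\infty$ on $\overline{S_\pm}\setminus\{\infty\}$, $H_\pm(0)=\mathrm{Id}$, transforming (L) via $w=H_\pm\tilde w$ into $\tilde u'=-z^{-2}(lz+\mu(1+z^2))\tilde u$, $\tilde v'=0$. $W_+=H_+F$ on $S_+$. $\Sigma_1$ is the component of $S_+\cap S_-$ containing $\mathbb R_+$. $M_N=\operatorname{diag}(e^{-2\pi il},1)$. The transformation $\mathbb I:(u,v)(z)\mapsto -iz^{-l}e^{\mu(1/z-z)}\big(-v(z^{-1}),u(z^{-1})\big)$ maps solutions of (L) to solutions of (L) and is an involution of the solution space; $\hat W_-=\mathbb I(W_+M_N)$ is obtained by applying $\mathbb I$ to each column. *)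

theory Defs
  imports "HOL-Analysis.Analysis"
begin

definition mat2 :: "complex \<Rightarrow> complex \<Rightarrow> complex \<Rightarrow> complex \<Rightarrow> complex^2^2" where
  "mat2 a b c d = (\<chi> i j. if i = 1 then (if j = 1 then a else b) else (if j = 1 then c else d))"

definition is_sector :: "complex set \<Rightarrow> bool" where
  "is_sector S \<longleftrightarrow> (\<exists>a b. a < b \<and>
     S = {complex_of_real r * cis t | r t. 0 < r \<and> a < t \<and> t < b})"

text \<open>Admissible sector S_+ (then S_- is its complex conjugate).\<close>
definition admissible_Splus :: "complex set \<Rightarrow> bool" where
  "admissible_Splus S \<longleftrightarrow> is_sector S \<and>
     {z. Im z \<ge> 0} - {0} \<subseteq> S \<and>
     closure S \<inter> {\<i> * complex_of_real t | t. t < 0} = {}"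

text \<open>Branches of z^a on S_+ (arg in (-pi/2, 3pi/2)) and on S_- (arg in (-3pi/2, pi/2)).\<close>
definition zpow_plus :: "complex \<Rightarrow> complex \<Rightarrow> complex" where
  "zpow_plus z a = exp (a * (Ln (- \<i> * z) + \<i> * of_real pi / 2))"

definition zpow_minus :: "complex \<Rightarrow> complex \<Rightarrow> complex" where
  "zpow_minus z a = exp (a * (Ln (\<i> * z) - \<i> * of_real pi / 2))"

text \<open>Coefficient matrix of system (L), written w' = A(z) w with w = (u,v).\<close>
definition coefL :: "real \<Rightarrow> real \<Rightarrow> real \<Rightarrow> complex \<Rightarrow> complex^2^2" where
  "coefL \<omega> l \<mu> z = mat2
     (- (of_real l * z + of_real \<mu> * (1 + z^2)) / z^2) (1 / (2 * \<i> * of_real \<omega> * z))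
     (1 / (2 * \<i> * of_real \<omega> * z)) 0"

text \<open>Coefficient matrix of the diagonal (formal normal form) system.\<close>
definition coefD :: "real \<Rightarrow> real \<Rightarrow> complex \<Rightarrow> complex^2^2" where
  "coefD l \<mu> z = mat2 (- (of_real l * z + of_real \<mu> * (1 + z^2)) / z^2) 0 0 0"

text \<open>H is a normalizing transformation on the sector S: invertible, holomorphic on S,
  C-infinity on closure S (all complex derivatives extend continuously to closure S,
  including the vertex 0), H(0) = Id, and w = H w~ transforms (L) into the diagonal system,
  i.e. H' = A H - H D.\<close>
definition normalizing_on :: "real \<Rightarrow> real \<Rightarrow> real \<Rightarrow> complex set \<Rightarrow> (complex \<Rightarrow> complex^2^2) \<Rightarrow> bool" where
  "normalizing_on \<omega> l \<mu> S H \<longleftrightarrow>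
     (\<forall>z\<in>S. invertible (H z)) \<and>
     (\<forall>i j. (\<lambda>z. H z $ i $ j) holomorphic_on S) \<and>
     (\<forall>i j k. \<forall>z0\<in>closure S. \<exists>L. (((deriv ^^ k) (\<lambda>z. H z $ i $ j)) \<longlongrightarrow> L) (at z0 within S)) \<and>
     (H \<longlongrightarrow> mat 1) (at 0 within S) \<and>
     (\<forall>z\<in>S. \<forall>i j. ((\<lambda>z. H z $ i $ j) has_field_derivative
         (coefL \<omega> l \<mu> z ** H z - H z ** coefD l \<mu> z) $ i $ j) (at z))"

definition Fplus :: "real \<Rightarrow> real \<Rightarrow> complex \<Rightarrow> complex^2^2" where
  "Fplus l \<mu> z = mat2 (zpow_plus z (- of_real l) * exp (of_real \<mu> * (1 / z - z))) 0 0 1"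

definition MN :: "real \<Rightarrow> complex^2^2" where
  "MN l = mat2 (exp (- 2 * of_real pi * \<i> * of_real l)) 0 0 1"

text \<open>The involution I applied columnwise to a matrix solution W (on S_-, branch of S_-):
  (I W)(z) = -i z^{-l} e^{mu(1/z - z)} P W(1/z), with P (u,v) = (-v,u).\<close>
definition invI :: "real \<Rightarrow> real \<Rightarrow> (complex \<Rightarrow> complex^2^2) \<Rightarrow> complex \<Rightarrow> complex^2^2" where
  "invI l \<mu> W z = (\<chi> i j. - \<i> * zpow_minus z (- of_real l) * exp (of_real \<mu> * (1 / z - z))
       * (mat2 0 (-1) 1 0 ** W (1 / z)) $ i $ j)"

end

theory Submission
  imports Defs
begin

text \<open>Both W = W_+ M_N and its image I(W) are fundamental matrix solutions of (L) on
  \<Sigma>_1: this set lies in the right half-plane and is stable under z \<mapsto> 1/z, and I maps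
  solutions to solutions. On the connected open set \<Sigma>_1 the Cramer quotient I(W)^-1 W has zero
  derivative, so W = I(W) Q for a constant Q. Since I is an involution commuting with right
  multiplication by constants, applying I gives I(W) = W Q, hence W = W Q^2 and Q^2 = Id.\<close>

lemma mat2_nth [simp]:
  "mat2 a b c d $ 1 $ 1 = a" "mat2 a b c d $ 1 $ 2 = b"
  "mat2 a b c d $ 2 $ 1 = c" "mat2 a b c d $ 2 $ 2 = d"
  by (simp_all add: mat2_def)

lemma matrix_mult_2_nth: "((X::'a::comm_ring_1^2^2) ** Y) $ i $ j = X$i$1 * Y$1$j + X$i$2 * Y$2$j"
  by (simp add: matrix_matrix_mult_def sum_2)

lemma matrix_2_eq_iff:
  "(M::'a^2^2) = N \<longleftrightarrow> M$1$1 = N$1$1 \<and> M$1$2 = N$1$2 \<and> M$2$1 = N$2$1 \<and> M$2$2 = N$2$2"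
  by (auto simp: vec_eq_iff forall_2)

definition cramer_solve :: "complex^2^2 \<Rightarrow> complex^2^2 \<Rightarrow> complex^2^2" where
  "cramer_solve V W = (\<chi> i j. (mat2 (V$2$2) (- V$1$2) (- V$2$1) (V$1$1) ** W) $ i $ j / det V)"

lemma matrix_mult_cramer_solve:
  assumes "det V \<noteq> 0" shows "V ** cramer_solve V W = W"
proof -
  have d: "V$1$1 * V$2$2 - V$1$2 * V$2$1 \<noteq> 0" using assms by (simp add: det_2)
  show ?thesis
    unfolding matrix_2_eq_iff using d
    by (simp add: cramer_solve_def matrix_mult_2_nth det_2 divide_simps) algebra
qed

definition matrix_ode_solution_on ::
    "(complex \<Rightarrow> complex^2^2) \<Rightarrow> complex set \<Rightarrow> (complex \<Rightarrow> complex^2^2) \<Rightarrow> bool" where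
  "matrix_ode_solution_on A S W \<longleftrightarrow>
     (\<forall>z\<in>S. \<forall>i j. ((\<lambda>z. W z $ i $ j) has_field_derivative (A z ** W z) $ i $ j) (at z))"

lemma cramer_solve_has_derivative_0:
  assumes V: "\<And>i j. ((\<lambda>z. V z $ i $ j) has_field_derivative (A ** V z) $ i $ j) (at z)"
    and W: "\<And>i j. ((\<lambda>z. W z $ i $ j) has_field_derivative (A ** W z) $ i $ j) (at z)"
    and det: "det (V z) \<noteq> 0"
  shows "((\<lambda>z. cramer_solve (V z) (W z) $ i $ j) has_field_derivative 0) (at z)"
proof -
  note V' = V[unfolded matrix_mult_2_nth] and W' = W[unfolded matrix_mult_2_nth]
  have "i = 1 \<or> i = 2" using exhaust_2 by blast
  then show ?thesis
    using det unfolding cramer_solve_def det_2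
    by (auto simp: matrix_mult_2_nth intro!: derivative_eq_intros V' W')
      (simp_all add: divide_simps algebra_simps)
qed

lemma matrix_ode_solutions_differ_by_constant:
  assumes S: "open S" "connected S"
    and V: "matrix_ode_solution_on A S V" and W: "matrix_ode_solution_on A S W"
    and det: "\<And>z. z \<in> S \<Longrightarrow> det (V z) \<noteq> 0"
  shows "\<exists>Q. \<forall>z\<in>S. W z = V z ** Q"
proof (cases "S = {}")
  case False
  then obtain z0 where z0: "z0 \<in> S" by blast
  have "(\<lambda>z. cramer_solve (V z) (W z) $ i $ j) constant_on S" for i j
    using V W det S unfolding matrix_ode_solution_on_def
    by (intro has_field_derivative_0_imp_constant_on cramer_solve_has_derivative_0) auto
  then have "cramer_solve (V z) (W z) = cramer_solve (V z0) (W z0)" if "z \<in> S" for z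
    using that z0 unfolding vec_eq_iff constant_on_def by metis
  then have "W z = V z ** cramer_solve (V z0) (W z0)" if "z \<in> S" for z
    using that det matrix_mult_cramer_solve by metis
  then show ?thesis by blast
qed simp

lemma matrix_ode_solution_on_subset:
  "matrix_ode_solution_on A S W \<Longrightarrow> T \<subseteq> S \<Longrightarrow> matrix_ode_solution_on A T W"
  by (auto simp: matrix_ode_solution_on_def)

lemma matrix_ode_solution_on_mult_right:
  assumes "matrix_ode_solution_on A S W"
  shows "matrix_ode_solution_on A S (\<lambda>z. W z ** Q)"
  using assms unfolding matrix_ode_solution_on_def matrix_mult_2_nth
  by (auto intro!: derivative_eq_intros simp: algebra_simps)

lemma matrix_mult_left_cancel:
  fixes M X Y :: "'a::field^'n^'n"
  assumes "det M \<noteq> 0" "M ** X = M ** Y" shows "X = Y"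
proof -
  obtain L where "L ** M = mat 1"
    using assms(1) invertible_det_nz invertible_left_inverse by blast
  then show ?thesis
    using arg_cong[OF assms(2), of "(**) L"] by (simp add: matrix_mul_assoc)
qed

lemma sector_nonzero: "is_sector S \<Longrightarrow> z \<in> S \<Longrightarrow> z \<noteq> 0"
  unfolding is_sector_def by auto

lemma sector_mult_pos_real:
  assumes "is_sector S" "z \<in> S" "c > 0" shows "complex_of_real c * z \<in> S"
proof -
  obtain a b where S: "S = {complex_of_real r * cis t |r t. 0 < r \<and> a < t \<and> t < b}"
    using assms(1) unfolding is_sector_def by blast
  obtain r t where "z = complex_of_real r * cis t" "0 < r" "a < t" "t < b"
    using assms(2) unfolding S by blast
  then have "complex_of_real c * z = complex_of_real (c * r) * cis t \<and> 0 < c * r \<and> a < t \<and> t < b"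
    using assms(3) by simp
  then show ?thesis unfolding S by blast
qed

lemma open_sector:
  assumes "is_sector S" shows "open S"
proof -
  obtain a b where S: "S = {complex_of_real r * cis t |r t. 0 < r \<and> a < t \<and> t < b}"
    using assms unfolding is_sector_def by blast
  show ?thesis
  proof (rule Topological_Spaces.openI)
    fix z0 assume "z0 \<in> S"
    then obtain r0 t0 where z0: "z0 = complex_of_real r0 * cis t0" "0 < r0" "a < t0" "t0 < b"
      unfolding S by blast
    then have "z0 \<noteq> 0" by simp
    define e where "e = min (t0 - a) (b - t0)"
    define T where "T = (\<lambda>z. z / z0) -` ({w. 0 < Re w} \<inter> Arg -` {-e<..<e})"
    \<comment> \<open>Near the positive axis, Arg is continuous; rotating by t0 keeps the angle in (a, b).\<close>
    have "open ({w. 0 < Re w} \<inter> Arg -` {-e<..<e})"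
      by (rule continuous_open_preimage)
        (auto intro: continuous_on_subset[OF continuous_on_Arg]
              simp: open_halfspace_Re_gt complex_nonpos_Reals_iff)
    then have "open T"
      unfolding T_def using \<open>z0 \<noteq> 0\<close>
      by (intro continuous_open_vimage) (auto intro!: continuous_intros)
    moreover have "z0 \<in> T" using \<open>z0 \<noteq> 0\<close> z0 by (simp add: T_def e_def)
    moreover have "T \<subseteq> S"
    proof
      fix z assume "z \<in> T"
      define w where "w = z / z0"
      have w: "0 < Re w" "\<bar>Arg w\<bar> < e" using \<open>z \<in> T\<close> unfolding T_def w_def by auto
      have "z = z0 * (complex_of_real (cmod w) * cis (Arg w))"
        using \<open>z0 \<noteq> 0\<close> by (simp add: w_def rcis_cmod_Arg[unfolded rcis_def])
      then have "z = complex_of_real (r0 * cmod w) * cis (t0 + Arg w)"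
        using z0 by (simp add: cis_mult[symmetric] algebra_simps)
      moreover have "0 < r0 * cmod w \<and> a < t0 + Arg w \<and> t0 + Arg w < b"
        using w z0 by (auto simp: e_def intro!: mult_pos_pos)
      ultimately show "z \<in> S" unfolding S by blast
    qed
    ultimately show "\<exists>T. open T \<and> z0 \<in> T \<and> T \<subseteq> S" by blast
  qed
qed

locale admissible_sector =
  fixes S :: "complex set"
  assumes admissible: "admissible_Splus S"
begin

definition Sigma1 :: "complex set" where
  "Sigma1 = connected_component_set (S \<inter> cnj ` S) 1"

lemma is_sector: "is_sector S"
  using admissible unfolding admissible_Splus_def by blast

lemma mem_cnj_image_iff: "z \<in> cnj ` S \<longleftrightarrow> cnj z \<in> S"
  by (metis complex_cnj_cnj image_iff)

lemma open_Sigma1: "open Sigma1"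
proof -
  have "cnj ` S = cnj -` S" using mem_cnj_image_iff by auto
  then have "open (S \<inter> cnj ` S)"
    using open_sector[OF is_sector] by (simp add: open_Int continuous_open_vimage continuous_on_cnj)
  then show ?thesis unfolding Sigma1_def by (rule open_connected_component)
qed

lemma connected_Sigma1: "connected Sigma1"
  unfolding Sigma1_def by simp

lemma one_in_Sigma1: "1 \<in> Sigma1"
  using admissible mem_cnj_image_iff[of 1] unfolding Sigma1_def admissible_Splus_def by auto

lemma Sigma1_subset: "Sigma1 \<subseteq> S \<inter> cnj ` S"
  unfolding Sigma1_def by (rule connected_component_subset)

lemma Im_nonneg_if_imaginary: "z \<in> S \<Longrightarrow> Re z = 0 \<Longrightarrow> 0 \<le> Im z"
proof (rule ccontr)
  assume "z \<in> S" "Re z = 0" "\<not> 0 \<le> Im z"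
  then have "z \<in> closure S \<inter> {\<i> * complex_of_real t | t. t < 0}"
    using closure_subset by (auto simp: complex_eq_iff intro!: exI[of _ "Im z"])
  then show False using admissible unfolding admissible_Splus_def by blast
qed

lemma Re_nonzero: "z \<in> S \<inter> cnj ` S \<Longrightarrow> Re z \<noteq> 0"
  using Im_nonneg_if_imaginary[of z] Im_nonneg_if_imaginary[of "cnj z"]
    sector_nonzero[OF is_sector, of z]
  by (auto simp: mem_cnj_image_iff complex_eq_iff)

lemma Re_pos_Sigma1: "z \<in> Sigma1 \<Longrightarrow> 0 < Re z"
proof (rule ccontr)
  assume "z \<in> Sigma1" "\<not> 0 < Re z"
  have "connected (Re ` Sigma1)"
    using connected_Sigma1 by (intro connected_continuous_image) (auto intro: continuous_intros)
  moreover have "Re z \<in> Re ` Sigma1" "1 \<in> Re ` Sigma1"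
    using \<open>z \<in> Sigma1\<close> one_in_Sigma1 by force+
  ultimately have "0 \<in> Re ` Sigma1"
    using \<open>\<not> 0 < Re z\<close> unfolding connected_iff_interval by (metis linorder_not_le zero_le_one)
  then show False using Re_nonzero Sigma1_subset by fastforce
qed

\<comment> \<open>Since 1/z is a positive multiple of cnj z, S \<inter> cnj ` S is closed under inversion.\<close>
lemma inverse_in_Sigma1:
  assumes "z \<in> Sigma1" shows "1 / z \<in> Sigma1"
proof -
  have inv: "1 / w \<in> S \<inter> cnj ` S" if "w \<in> S \<inter> cnj ` S" for w
  proof -
    have "w \<noteq> 0" using that sector_nonzero[OF is_sector] by blast
    then have c: "1 / (cmod w)\<^sup>2 > 0" by simp
    have "1 / w = complex_of_real (1 / (cmod w)\<^sup>2) * cnj w"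
      "cnj (1 / w) = complex_of_real (1 / (cmod w)\<^sup>2) * w"
      by (simp_all add: complex_div_cnj[of 1 w])
    moreover have "cnj w \<in> S" "w \<in> S" using that mem_cnj_image_iff by auto
    ultimately show ?thesis
      using sector_mult_pos_real[OF is_sector _ c] by (simp add: mem_cnj_image_iff)
  qed
  have "continuous_on Sigma1 (\<lambda>w. 1 / w)"
    using Re_pos_Sigma1 by (intro continuous_on_divide continuous_intros) fastforce
  then have "connected ((\<lambda>w. 1 / w) ` Sigma1)"
    using connected_Sigma1 by (rule connected_continuous_image)
  moreover have "1 \<in> (\<lambda>w. 1 / w) ` Sigma1" using one_in_Sigma1 by (intro rev_image_eqI[of 1]) auto
  moreover have "(\<lambda>w. 1 / w) ` Sigma1 \<subseteq> S \<inter> cnj ` S" using Sigma1_subset inv by blast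
  ultimately have "(\<lambda>w. 1 / w) ` Sigma1 \<subseteq> Sigma1"
    unfolding Sigma1_def using connected_component_maximal by metis
  then show ?thesis using assms by blast
qed

end

lemma not_nonpos_Reals_if_Re_pos:
  "0 < Re z \<Longrightarrow> - \<i> * z \<notin> \<real>\<^sub>\<le>\<^sub>0" "0 < Re z \<Longrightarrow> \<i> * z \<notin> \<real>\<^sub>\<le>\<^sub>0"
  by (auto simp: complex_nonpos_Reals_iff)

lemma Re_inverse_pos: "0 < Re z \<Longrightarrow> 0 < Re (1 / z)"
  by (simp add: Re_divide divide_simps not_less add_nonneg_nonneg)
    (smt (verit) zero_less_power2 zero_le_power2)

lemma zpow_plus_has_field_derivative:
  assumes "0 < Re z"
  shows "((\<lambda>z. zpow_plus z a) has_field_derivative (a / z * zpow_plus z a)) (at z)"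
proof -
  have "z \<noteq> 0" using assms by auto
  show ?thesis unfolding zpow_plus_def
    by (rule derivative_eq_intros refl not_nonpos_Reals_if_Re_pos[OF assms] | simp)+
      (use \<open>z \<noteq> 0\<close> in \<open>simp add: field_simps\<close>)
qed

lemma zpow_minus_has_field_derivative:
  assumes "0 < Re z"
  shows "((\<lambda>z. zpow_minus z a) has_field_derivative (a / z * zpow_minus z a)) (at z)"
proof -
  have "z \<noteq> 0" using assms by auto
  show ?thesis unfolding zpow_minus_def
    by (rule derivative_eq_intros refl not_nonpos_Reals_if_Re_pos[OF assms] | simp)+
      (use \<open>z \<noteq> 0\<close> in \<open>simp add: field_simps\<close>)
qed

lemma zpow_minus_eq_exp_Ln:
  assumes "0 < Re z" shows "zpow_minus z a = exp (a * Ln z)"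
proof -
  have "\<bar>Im (Ln z)\<bar> < pi / 2" using Re_Ln_pos_lt_imp assms by blast
  moreover have "z \<noteq> 0" using assms by auto
  ultimately have "Ln (\<i> * z) = Ln \<i> + Ln z" by (intro Ln_times_simple) auto
  then show ?thesis unfolding zpow_minus_def by simp
qed

lemma zpow_minus_mult_inverse:
  assumes "0 < Re z" shows "zpow_minus z a * zpow_minus (1 / z) a = 1"
proof -
  have "zpow_minus (1 / z) a = exp (a * Ln (inverse z))"
    using zpow_minus_eq_exp_Ln[OF Re_inverse_pos[OF assms]] by (simp add: divide_inverse)
  also have "Ln (inverse z) = - Ln z"
    using assms by (intro Ln_inverse) (auto simp: complex_nonpos_Reals_iff)
  finally show ?thesis
    using zpow_minus_eq_exp_Ln[OF assms] by (simp add: exp_minus[symmetric] exp_add[symmetric])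
qed

definition normal_form_coef :: "real \<Rightarrow> real \<Rightarrow> complex \<Rightarrow> complex" where
  "normal_form_coef l \<mu> z = - (of_real l * z + of_real \<mu> * (1 + z^2)) / z^2"

definition fplus_entry :: "real \<Rightarrow> real \<Rightarrow> complex \<Rightarrow> complex" where
  "fplus_entry l \<mu> z = zpow_plus z (- of_real l) * exp (of_real \<mu> * (1 / z - z))"

definition invI_factor :: "real \<Rightarrow> real \<Rightarrow> complex \<Rightarrow> complex" where
  "invI_factor l \<mu> z = - \<i> * zpow_minus z (- of_real l) * exp (of_real \<mu> * (1 / z - z))"

lemma fplus_entry_has_field_derivative:
  assumes "0 < Re z"
  shows "(fplus_entry l \<mu> has_field_derivative normal_form_coef l \<mu> z * fplus_entry l \<mu> z) (at z)"
proof -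
  have "z \<noteq> 0" using assms by auto
  show ?thesis unfolding fplus_entry_def normal_form_coef_def
    by (rule derivative_eq_intros refl zpow_plus_has_field_derivative[OF assms] | simp add: \<open>z \<noteq> 0\<close>)+
      (use \<open>z \<noteq> 0\<close> in \<open>simp add: field_simps power2_eq_square\<close>)
qed

lemma invI_factor_has_field_derivative:
  assumes "0 < Re z"
  shows "(invI_factor l \<mu> has_field_derivative normal_form_coef l \<mu> z * invI_factor l \<mu> z) (at z)"
proof -
  have "z \<noteq> 0" using assms by auto
  show ?thesis unfolding invI_factor_def normal_form_coef_def
    by (rule derivative_eq_intros refl zpow_minus_has_field_derivative[OF assms] | simp add: \<open>z \<noteq> 0\<close>)+
      (use \<open>z \<noteq> 0\<close> in \<open>simp add: field_simps power2_eq_square\<close>)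
qed

lemma invI_factor_mult_inverse:
  assumes "0 < Re z" shows "invI_factor l \<mu> z * invI_factor l \<mu> (1 / z) = -1"
proof -
  have "z \<noteq> 0" using assms by auto
  have "invI_factor l \<mu> z * invI_factor l \<mu> (1 / z) =
      - ((zpow_minus z (- of_real l) * zpow_minus (1 / z) (- of_real l))
        * exp (of_real \<mu> * (1 / z - z) + of_real \<mu> * (z - 1 / z)))"
    unfolding invI_factor_def exp_add by (simp add: \<open>z \<noteq> 0\<close> mult_ac)
  also have "\<dots> = -1" using zpow_minus_mult_inverse[OF assms] by (simp add: algebra_simps)
  finally show ?thesis .
qed

lemma invI_nth:
  "invI l \<mu> W z $ 1 $ j = - invI_factor l \<mu> z * W (1 / z) $ 2 $ j"
  "invI l \<mu> W z $ 2 $ j = invI_factor l \<mu> z * W (1 / z) $ 1 $ j"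
  by (simp_all add: invI_def invI_factor_def matrix_mult_2_nth)

lemma invI_involutive:
  assumes "0 < Re z" shows "invI l \<mu> (invI l \<mu> W) z = W z"
proof -
  have "- (invI_factor l \<mu> z * (invI_factor l \<mu> (1 / z) * x)) = x" for x
    using invI_factor_mult_inverse[OF assms, of l \<mu>] by algebra
  then show ?thesis unfolding matrix_2_eq_iff by (simp add: invI_nth mult.left_commute)
qed

lemma invI_mult_right: "invI l \<mu> (\<lambda>w. W w ** Q) z = invI l \<mu> W z ** Q"
  unfolding matrix_2_eq_iff by (simp add: invI_nth matrix_mult_2_nth algebra_simps)

lemma det_invI: "det (invI l \<mu> W z) = (invI_factor l \<mu> z)\<^sup>2 * det (W (1 / z))"
  by (simp add: det_2 invI_nth algebra_simps power2_eq_square)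

lemma invI_factor_nonzero: "0 < Re z \<Longrightarrow> invI_factor l \<mu> z \<noteq> 0"
  by (metis invI_factor_mult_inverse mult_zero_left zero_neq_neg_one)

lemma coefL_eq:
  "coefL \<omega> l \<mu> z = mat2 (normal_form_coef l \<mu> z) (1 / (2 * \<i> * of_real \<omega> * z))
     (1 / (2 * \<i> * of_real \<omega> * z)) 0"
  by (simp add: coefL_def normal_form_coef_def)

lemma coefD_eq: "coefD l \<mu> z = mat2 (normal_form_coef l \<mu> z) 0 0 0"
  by (simp add: coefD_def normal_form_coef_def)

lemma normalizing_on_Fplus_solution:
  assumes "normalizing_on \<omega> l \<mu> S H"
  shows "matrix_ode_solution_on (coefL \<omega> l \<mu>) {z \<in> S. 0 < Re z} (\<lambda>z. H z ** Fplus l \<mu> z)"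
  unfolding matrix_ode_solution_on_def
proof (intro ballI allI)
  fix z and i j :: 2 assume "z \<in> {z \<in> S. 0 < Re z}"
  then have z: "z \<in> S" "0 < Re z" by auto
  have H': "((\<lambda>z. H z $ i $ k) has_field_derivative
      (coefL \<omega> l \<mu> z ** H z - H z ** coefD l \<mu> z) $ i $ k) (at z)" for k
    using assms z unfolding normalizing_on_def by blast
  have entries: "(H w ** Fplus l \<mu> w) $ i $ 1 = H w $ i $ 1 * fplus_entry l \<mu> w"
    "(H w ** Fplus l \<mu> w) $ i $ 2 = H w $ i $ 2" for w
    by (simp_all add: Fplus_def fplus_entry_def matrix_mult_2_nth)
  have "j = 1 \<or> j = 2" using exhaust_2 by blast
  then show "((\<lambda>z. (H z ** Fplus l \<mu> z) $ i $ j) has_field_derivative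
      (coefL \<omega> l \<mu> z ** (H z ** Fplus l \<mu> z)) $ i $ j) (at z)"
  proof
    assume "j = 1"
    show ?thesis unfolding \<open>j = 1\<close> entries
      by (rule derivative_eq_intros H' fplus_entry_has_field_derivative[OF z(2)] refl)+
        (simp add: matrix_mult_2_nth coefD_eq Fplus_def fplus_entry_def algebra_simps)
  next
    assume "j = 2"
    show ?thesis unfolding \<open>j = 2\<close> entries
      using H'[of 2] by (simp add: matrix_mult_2_nth coefD_eq Fplus_def)
  qed
qed

lemma det_Fplus_nonzero: "det (Fplus l \<mu> z) \<noteq> 0"
  by (simp add: det_2 Fplus_def zpow_plus_def)

lemma det_MN_nonzero: "det (MN l) \<noteq> 0"
  by (simp add: det_2 MN_def)

lemma invI_solution:
  assumes W: "matrix_ode_solution_on (coefL \<omega> l \<mu>) T W"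
    and U: "\<And>z. z \<in> U \<Longrightarrow> 0 < Re z \<and> 1 / z \<in> T"
  shows "matrix_ode_solution_on (coefL \<omega> l \<mu>) U (invI l \<mu> W)"
  unfolding matrix_ode_solution_on_def
proof (intro ballI allI)
  fix z and i j :: 2 assume "z \<in> U"
  then have z: "0 < Re z" "1 / z \<in> T" "z \<noteq> 0" using U by fastforce+
  have W': "((\<lambda>w. W (1 / w) $ k $ j) has_field_derivative
      (coefL \<omega> l \<mu> (1 / z) ** W (1 / z)) $ k $ j * (- 1 / z\<^sup>2)) (at z)" for k
  proof (rule DERIV_chain2[where f = "\<lambda>w. W w $ k $ j"])
    show "((\<lambda>w. W w $ k $ j) has_field_derivative (coefL \<omega> l \<mu> (1 / z) ** W (1 / z)) $ k $ j) (at (1 / z))"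
      using W z unfolding matrix_ode_solution_on_def by blast
    show "((\<lambda>w. 1 / w) has_field_derivative - 1 / z\<^sup>2) (at z)"
      using z by (auto intro!: derivative_eq_intros simp: power2_eq_square)
  qed
  note g' = invI_factor_has_field_derivative[OF z(1)]
  have "i = 1 \<or> i = 2" using exhaust_2 by blast
  then show "((\<lambda>z. invI l \<mu> W z $ i $ j) has_field_derivative
      (coefL \<omega> l \<mu> z ** invI l \<mu> W z) $ i $ j) (at z)"
  proof
    assume "i = 1"
    show ?thesis unfolding \<open>i = 1\<close> invI_nth
      by (rule derivative_eq_intros W' g' refl)+
        (use z in \<open>simp add: matrix_mult_2_nth invI_nth coefL_eq normal_form_coef_def
                     field_simps power2_eq_square\<close>)
  next
    assume "i = 2"
    show ?thesis unfolding \<open>i = 2\<close> invI_nth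
      by (rule derivative_eq_intros W' g' refl)+
        (use z in \<open>simp add: matrix_mult_2_nth invI_nth coefL_eq normal_form_coef_def
                     field_simps power2_eq_square\<close>)
  qed
qed

\<comment> \<open>I(W) only sees W at 1/z, so the relation may be substituted inside I.\<close>
lemma invI_relation_square_identity:
  assumes T: "\<And>z. z \<in> T \<Longrightarrow> 0 < Re z \<and> 1 / z \<in> T"
    and rel: "\<And>z. z \<in> T \<Longrightarrow> W z = invI l \<mu> W z ** Q"
    and z: "z \<in> T" and det: "det (W z) \<noteq> 0"
  shows "Q ** Q = mat 1"
proof -
  have "invI l \<mu> W z = invI l \<mu> (\<lambda>w. invI l \<mu> W w ** Q) z"
    using rel[of "1 / z"] T[OF z] by (simp add: invI_def)
  also have "\<dots> = invI l \<mu> (invI l \<mu> W) z ** Q"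
    by (rule invI_mult_right)
  also have "\<dots> = W z ** Q"
    using T[OF z] by (simp add: invI_involutive)
  finally have "W z ** mat 1 = W z ** (Q ** Q)"
    using rel[OF z] by (simp add: matrix_mul_assoc)
  then show ?thesis
    by (metis matrix_mult_left_cancel[OF det])
qed

theorem mainTheorem6:
  fixes \<omega> B A :: real and Splus Sminus :: "complex set" and Hplus :: "complex \<Rightarrow> complex^2^2"
  assumes "\<omega> > 0" and "B \<ge> 0" and "A > 0"
    and "admissible_Splus Splus"
    and "Sminus = cnj ` Splus"
    and "normalizing_on \<omega> (B / \<omega>) (A / (2 * \<omega>)) Splus Hplus"
  shows "\<exists>Q :: complex^2^2.
     (\<forall>z \<in> connected_component_set (Splus \<inter> Sminus) 1.
        Hplus z ** Fplus (B / \<omega>) (A / (2 * \<omega>)) z ** MN (B / \<omega>)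
        = invI (B / \<omega>) (A / (2 * \<omega>))
            (\<lambda>w. Hplus w ** Fplus (B / \<omega>) (A / (2 * \<omega>)) w ** MN (B / \<omega>)) z ** Q)
     \<and> Q ** Q = mat 1"
proof -
  interpret admissible_sector Splus by unfold_locales (rule assms(4))
  define l \<mu> where "l = B / \<omega>" and "\<mu> = A / (2 * \<omega>)"
  define W where "W z = Hplus z ** Fplus l \<mu> z ** MN l" for z
  have inv: "0 < Re z \<and> 1 / z \<in> Sigma1" if "z \<in> Sigma1" for z
    using that Re_pos_Sigma1 inverse_in_Sigma1 by blast
  have H: "normalizing_on \<omega> l \<mu> Splus Hplus"
    using assms(6) by (simp add: l_def \<mu>_def)
  have "Sigma1 \<subseteq> {z \<in> Splus. 0 < Re z}"
    using Sigma1_subset Re_pos_Sigma1 by blast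
  then have sol_W: "matrix_ode_solution_on (coefL \<omega> l \<mu>) Sigma1 W"
    unfolding W_def
    by (rule matrix_ode_solution_on_subset[OF matrix_ode_solution_on_mult_right
          [OF normalizing_on_Fplus_solution[OF H]]])
  have det_W: "det (W z) \<noteq> 0" if "z \<in> Sigma1" for z
    using that Sigma1_subset H det_Fplus_nonzero det_MN_nonzero
    by (auto simp: W_def det_mul normalizing_on_def invertible_det_nz)
  obtain Q where Q: "\<forall>z\<in>Sigma1. W z = invI l \<mu> W z ** Q"
    using matrix_ode_solutions_differ_by_constant[OF open_Sigma1 connected_Sigma1
        invI_solution[OF sol_W inv] sol_W]
      inv det_W by (auto simp: det_invI invI_factor_nonzero)
  have "Q ** Q = mat 1"
    using invI_relation_square_identity[OF inv] Q one_in_Sigma1 det_W by blast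
  then show ?thesis
    using Q unfolding W_def Sigma1_def assms(5) l_def \<mu>_def by blast
qed

end
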